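(* Let $S$ be a finite set of possibly partial distributions all with the same total mass, and let $\textsc{OPT}_S$ be a minimum-entropy coupling of $S$ (viewed as a possibly partial distribution via its list of nonzero masses). Then $\textsc{Inv-Sketch}_{\textsc{OPT}_S}(y)\ge\textsc{Inv-Prof}_S(y)$ for all $y\in[0,1]$.
   Context: A possibly partial distribution is a finite vector of nonnegative reals with total mass at most $1$. A coupling of $S=\{p_1,\dots,p_m\}$ is a nonnegative array $\mathcal C(i_1,\dots,i_m)$ whose sum over all tuples with $k$-th coordinate $i_k$ equals $p_k(i_k)$; $\textsc{OPT}_S$ minimizes $\sum\mathcal C(i)\log_2(1/\mathcal C(i))$. For a possibly partial distribution $p$, $\textsc{Inv-Sketch}_p(y)=\sum_j p(j)\,[p(j)\le y]$, and $\textsc{Inv-Prof}_S(y)=\max_{p\in S}\textsc{Inv-Sketch}_p(y)$. *)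

theory Defs
  imports Complex_Main
begin

definition partial_dist :: "real list \<Rightarrow> bool" where
  "partial_dist p \<longleftrightarrow> (\<forall>x\<in>set p. 0 \<le> x) \<and> sum_list p \<le> 1"

definition tuples :: "real list list \<Rightarrow> nat list set" where
  "tuples ps = {t. length t = length ps \<and> (\<forall>k<length ps. t ! k < length (ps ! k))}"

definition is_coupling :: "real list list \<Rightarrow> (nat list \<Rightarrow> real) \<Rightarrow> bool" where
  "is_coupling ps C \<longleftrightarrow>
     (\<forall>t\<in>tuples ps. 0 \<le> C t) \<and>
     (\<forall>k<length ps. \<forall>i<length (ps ! k).
        (\<Sum>t\<in>{t\<in>tuples ps. t ! k = i}. C t) = ps ! k ! i)"

definition coupling_entropy :: "real list list \<Rightarrow> (nat list \<Rightarrow> real) \<Rightarrow> real" where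
  "coupling_entropy ps C = (\<Sum>t\<in>tuples ps. C t * log 2 (1 / C t))"

definition is_min_entropy_coupling :: "real list list \<Rightarrow> (nat list \<Rightarrow> real) \<Rightarrow> bool" where
  "is_min_entropy_coupling ps C \<longleftrightarrow> is_coupling ps C \<and>
     (\<forall>C'. is_coupling ps C' \<longrightarrow> coupling_entropy ps C \<le> coupling_entropy ps C')"

definition inv_sketch :: "real list \<Rightarrow> real \<Rightarrow> real" where
  "inv_sketch p y = sum_list (map (\<lambda>x. if x \<le> y then x else 0) p)"

definition inv_prof :: "real list list \<Rightarrow> real \<Rightarrow> real" where
  "inv_prof ps y = Max ((\<lambda>p. inv_sketch p y) ` set ps)"

text \<open>Inv-Sketch of a coupling viewed as a possibly partial distribution via its
  masses (zero masses contribute nothing).\<close>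
definition coupling_inv_sketch :: "real list list \<Rightarrow> (nat list \<Rightarrow> real) \<Rightarrow> real \<Rightarrow> real" where
  "coupling_inv_sketch ps C y = (\<Sum>t\<in>tuples ps. if C t \<le> y then C t else 0)"

end

theory Submission
  imports Defs
begin

text \<open>Every mass \<open>p\<^sub>k(i) \<le> y\<close> of a marginal is split by the coupling into masses
  \<open>C(t) \<le> p\<^sub>k(i) \<le> y\<close>, all of which are counted by the sketch of the coupling. Hence the
  sketch of any coupling dominates the sketch of each marginal, and so the profile.\<close>

lemma finite_tuples: "finite (tuples ps)"
proof -
  let ?B = "sum_list (map length ps)"
  have "tuples ps \<subseteq> {t. set t \<subseteq> {..<?B} \<and> length t = length ps}"
  proof
    fix t assume t: "t \<in> tuples ps"
    have "x < ?B" if "x \<in> set t" for x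
    proof -
      obtain k where k: "k < length ps" "x = t ! k"
        using t \<open>x \<in> set t\<close> by (auto simp: in_set_conv_nth tuples_def)
      with t have "x < length (ps ! k)" by (simp add: tuples_def)
      also have "\<dots> \<le> ?B" using elem_le_sum_list[of k "map length ps"] k by simp
      finally show ?thesis .
    qed
    with t show "t \<in> {t. set t \<subseteq> {..<?B} \<and> length t = length ps}"
      by (auto simp: tuples_def)
  qed
  moreover have "finite {t. set t \<subseteq> {..<?B} \<and> length t = length ps}"
    by (rule finite_lists_length_eq) simp
  ultimately show ?thesis by (rule finite_subset)
qed

lemma coupling_le_marginal:
  assumes "is_coupling ps C" and "k < length ps" and "t \<in> tuples ps"
  shows "C t \<le> ps ! k ! (t ! k)"
proof -
  have "C t \<le> (\<Sum>s\<in>{s\<in>tuples ps. s ! k = t ! k}. C s)"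
    by (rule member_le_sum) (use assms finite_tuples in \<open>auto simp: is_coupling_def\<close>)
  also have "\<dots> = ps ! k ! (t ! k)"
    using assms by (simp add: is_coupling_def tuples_def)
  finally show ?thesis .
qed

lemma inv_sketch_conv_sum:
  "inv_sketch p y = (\<Sum>i<length p. if p ! i \<le> y then p ! i else 0)"
  unfolding inv_sketch_def by (simp add: sum_list_sum_nth atLeast0LessThan)

lemma inv_sketch_marginal_le_coupling_inv_sketch:
  assumes cp: "is_coupling ps C" and k: "k < length ps"
  shows "inv_sketch (ps ! k) y \<le> coupling_inv_sketch ps C y"
proof -
  let ?p = "ps ! k" and ?T = "tuples ps"
  let ?small = "\<lambda>t. ?p ! (t ! k) \<le> y"
  have nonneg: "0 \<le> C t" if "t \<in> ?T" for t
    using cp that by (simp add: is_coupling_def)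
  have "inv_sketch ?p y = (\<Sum>i<length ?p. \<Sum>t\<in>{t\<in>?T. t ! k = i}. if ?small t then C t else 0)"
    unfolding inv_sketch_conv_sum
  proof (rule sum.cong[OF refl])
    fix i assume "i \<in> {..<length ?p}"
    then have "(\<Sum>t\<in>{t\<in>?T. t ! k = i}. C t) = ?p ! i"
      using cp k by (simp add: is_coupling_def)
    moreover have "(\<Sum>t\<in>{t\<in>?T. t ! k = i}. if ?small t then C t else 0)
        = (\<Sum>t\<in>{t\<in>?T. t ! k = i}. if ?p ! i \<le> y then C t else 0)"
      by (rule sum.cong) auto
    ultimately show "(if ?p ! i \<le> y then ?p ! i else 0)
        = (\<Sum>t\<in>{t\<in>?T. t ! k = i}. if ?small t then C t else 0)"
      by simp
  qed
  also have "\<dots> = (\<Sum>t\<in>?T. if ?small t then C t else 0)"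
    by (rule sum.group[OF finite_tuples]) (use k in \<open>auto simp: tuples_def\<close>)
  also have "\<dots> \<le> (\<Sum>t\<in>?T. if C t \<le> y then C t else 0)"
  proof (rule sum_mono)
    fix t assume "t \<in> ?T"
    then show "(if ?small t then C t else 0) \<le> (if C t \<le> y then C t else 0)"
      using coupling_le_marginal[OF cp k, of t] nonneg[of t] by auto
  qed
  finally show ?thesis unfolding coupling_inv_sketch_def .
qed

lemma inv_prof_le_coupling_inv_sketch:
  assumes "ps \<noteq> []" and "is_coupling ps C"
  shows "inv_prof ps y \<le> coupling_inv_sketch ps C y"
  unfolding inv_prof_def using assms inv_sketch_marginal_le_coupling_inv_sketch
  by (subst Max_le_iff) (auto simp: in_set_conv_nth)

theorem lemma4:
  fixes ps :: "real list list" and C :: "nat list \<Rightarrow> real" and y :: real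
  assumes "ps \<noteq> []"
    and "\<forall>p\<in>set ps. partial_dist p"
    and "\<forall>p\<in>set ps. \<forall>q\<in>set ps. sum_list p = sum_list q"
    and "is_min_entropy_coupling ps C"
    and "0 \<le> y" and "y \<le> 1"
  shows "coupling_inv_sketch ps C y \<ge> inv_prof ps y"
  using inv_prof_le_coupling_inv_sketch assms(1,4)
  by (simp add: is_min_entropy_coupling_def)

end
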